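(* Let $0<\beta<1$, let $p>0$, and let $u\in W^{1,1}[-p,p]$ be a nonnegative real-valued function with $u(-p)=u(p)=0$. Define $$L=\int_{-p}^p\sqrt{1+u'(x)^2}\,dx,\qquad A=\int_{-p}^p u(x)\,dx.$$ Then $$L\ \ge\ \Big(\frac{\arccos\beta}{\sqrt{1-\beta^2}}+\beta\Big)p+\sqrt{1-\beta^2}\,\frac{A}{p},$$ with equality if and only if $u(x)=\sqrt{R^2-x^2}-\beta R$ on $[-p,p]$, where $R=\dfrac{p}{\sqrt{1-\beta^2}}$.
   Context: $W^{1,1}[-p,p]$ denotes the Sobolev space of integrable functions on $[-p,p]$ with integrable weak derivative; such functions are absolutely continuous, so the endpoint values $u(\pm p)$ are well defined. *)

theory Defs
  imports "HOL-Analysis.Analysis"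
begin

text \<open>Membership of u in W^{1,1}[-p,p] with weak derivative g, expressed via the
absolutely continuous representative: g is Lebesgue integrable on [-p,p] and
u is the indefinite integral of g (this is the standard characterization of
W^{1,1} on a bounded interval).\<close>
definition W11_with_deriv :: "real \<Rightarrow> (real \<Rightarrow> real) \<Rightarrow> (real \<Rightarrow> real) \<Rightarrow> bool" where
  "W11_with_deriv p u g \<longleftrightarrow>
     g absolutely_integrable_on {-p..p} \<and>
     (\<forall>x\<in>{-p..p}. u x = u (-p) + integral {-p..x} g)"

end

theory Submission
  imports Defs
begin

text \<open>For \<open>|x| < R\<close> the vector \<open>(sqrt (R\<^sup>2 - x\<^sup>2), -x) / R\<close> is the unit tangent of the circle
  of radius \<open>R\<close> centred on the vertical axis and passing through \<open>(\<plusminus>p, 0)\<close>. By Cauchy-Schwarz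
  its inner product with \<open>(1, u' x)\<close> is at most \<open>sqrt (1 + (u' x)\<^sup>2)\<close>, with equality exactly when
  \<open>u' x\<close> is the slope \<open>- x / sqrt (R\<^sup>2 - x\<^sup>2)\<close> of the circle. Integrating over \<open>[-p, p]\<close>, and
  integrating by parts \<open>\<integral> x u' = - \<integral> u\<close> because \<open>u\<close> vanishes at \<open>\<plusminus>p\<close>, gives
  \<open>L \<ge> (\<integral> sqrt (R\<^sup>2 - x\<^sup>2) + A) / R\<close>; for \<open>R = p / sqrt (1 - \<beta>\<^sup>2)\<close> this is the claimed bound.
  Equality forces \<open>u'\<close> to be the slope of the circle almost everywhere, and since \<open>u\<close> is the
  indefinite integral of \<open>u'\<close>, the graph of \<open>u\<close> is then the circular arc.\<close>

section \<open>Absolutely integrable functions on an interval\<close>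

lemma absolutely_integrable_on_borel_representative:
  fixes g :: "real \<Rightarrow> real"
  assumes "g absolutely_integrable_on {a..b}"
  obtains g0 N where "integrable lborel g0" "negligible N"
    "\<And>x. x \<notin> {a..b} \<Longrightarrow> g0 x = 0" "\<And>x. x \<in> {a..b} - N \<Longrightarrow> g0 x = g x"
proof -
  define G where "G x = indicator {a..b} x * g x" for x
  have G: "integrable lebesgue G"
    using assms unfolding G_def set_integrable_def by simp
  then obtain g1 where g1: "g1 \<in> borel_measurable borel" "AE x in lborel. G x = g1 x"
    using completion_ex_borel_measurable_real[of G lborel] by auto
  define g0 where "g0 x = indicator {a..b} x * g1 x" for x
  have g0: "g0 \<in> borel_measurable borel"
    using g1(1) unfolding g0_def by simp
  have "AE x in lborel. G x = g0 x"
    using g1(2) by eventually_elim (auto simp: G_def g0_def indicator_def of_bool_def split: if_splits)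
  then have ae: "AE x in lebesgue. G x = g0 x"
    by (rule AE_completion)
  have "integrable lebesgue g0"
    using g0 by (intro integrable_cong_AE_imp[OF G _ ae]) (simp add: measurable_completion)
  then have "integrable lborel g0"
    using g0 integrable_completion[of g0 lborel] by simp
  moreover obtain N where "negligible N" "{x. G x \<noteq> g0 x} \<subseteq> N"
    using ae unfolding eventually_ae_filter_negligible by auto
  ultimately show ?thesis
    using that[of g0 N] by (force simp: G_def g0_def)
qed

lemma integrable_lborel_integral_eq_set_integral:
  fixes g :: "'a::euclidean_space \<Rightarrow> 'b::euclidean_space"
  assumes "integrable lborel g" and "S \<in> sets borel"
  shows "g integrable_on S" "integral S g = (LINT x:S|lborel. g x)"
proof -
  have g: "set_integrable lborel S g"
    using assms unfolding set_integrable_def by (intro integrable_mult_indicator) auto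
  show "g integrable_on S" "integral S g = (LINT x:S|lborel. g x)"
    using set_borel_integral_eq_integral[OF g] by auto
qed

lemma emeasure_density_eq_set_integral_max_0:
  fixes f :: "'a \<Rightarrow> real"
  assumes f: "integrable M f" and A: "A \<in> sets M"
  shows "emeasure (density M (\<lambda>x. ennreal (f x))) A = ennreal (LINT x:A|M. max 0 (f x))"
proof -
  have "emeasure (density M (\<lambda>x. ennreal (f x))) A = (\<integral>\<^sup>+x. ennreal (indicator A x * max 0 (f x)) \<partial>M)"
    using borel_measurable_integrable[OF f] A
    by (auto simp: emeasure_density indicator_def max_def ennreal_neg intro!: nn_integral_cong)
  also have "\<dots> = ennreal (LINT x:A|M. max 0 (f x))"
    unfolding set_lebesgue_integral_def
    using integrable_mult_indicator[OF A, of "\<lambda>x. max 0 (f x)"] f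
    by (subst nn_integral_eq_integral) auto
  finally show ?thesis .
qed

lemma AE_zero_if_set_integrals_greaterThan_zero:
  fixes g :: "real \<Rightarrow> real"
  assumes g: "integrable lborel g" and zero: "\<And>c. (LINT x:{c<..}|lborel. g x) = 0"
  shows "AE x in lborel. g x = 0"
proof -
  have pos_part: "emeasure (density lborel (\<lambda>x. ennreal (g x))) {c<..} = ennreal (LINT x:{c<..}|lborel. max 0 (g x))"
    and neg_part: "emeasure (density lborel (\<lambda>x. ennreal (- g x))) {c<..} = ennreal (LINT x:{c<..}|lborel. max 0 (- g x))"
    for c
    using g by (auto intro: emeasure_density_eq_set_integral_max_0)
  have pos_minus_neg: "(LINT x:{c<..}|lborel. max 0 (g x)) - (LINT x:{c<..}|lborel. max 0 (- g x))
      = (LINT x:{c<..}|lborel. g x)" for c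
  proof -
    have "set_integrable lborel {c<..} (\<lambda>x. max 0 (f x))" if "integrable lborel f" for f :: "real \<Rightarrow> real"
      using that unfolding set_integrable_def by (intro integrable_mult_indicator) auto
    then have "(LINT x:{c<..}|lborel. max 0 (g x)) - (LINT x:{c<..}|lborel. max 0 (- g x))
        = (LINT x:{c<..}|lborel. max 0 (g x) - max 0 (- g x))"
      using g by (intro set_integral_diff(2)[symmetric]) auto
    also have "\<dots> = (LINT x:{c<..}|lborel. g x)"
      by (intro set_lebesgue_integral_cong) auto
    finally show ?thesis .
  qed
  have half_lines: "emeasure (density lborel (\<lambda>x. ennreal (g x))) {c<..}
      = emeasure (density lborel (\<lambda>x. ennreal (- g x))) {c<..}" for c
    using pos_minus_neg[of c] zero[of c] by (simp add: pos_part neg_part)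
  have "density lborel (\<lambda>x. ennreal (g x)) = density lborel (\<lambda>x. ennreal (- g x))"
  proof (rule measure_eqI_lessThan)
    show "emeasure (density lborel (\<lambda>x. ennreal (g x))) {c<..} < \<infinity>" for c
      by (simp add: pos_part)
  qed (use half_lines in auto)
  then have "AE x in lborel. ennreal (g x) = ennreal (- g x)"
    using g by (subst (asm) sigma_finite_measure.density_unique_iff[OF sigma_finite_lborel]) auto
  then show ?thesis
  proof eventually_elim
    case (elim x)
    then show ?case
      by (cases "g x" "0::real" rule: linorder_cases) (auto simp: ennreal_neg)
  qed
qed

lemma AE_zero_if_interval_integrals_zero:
  fixes g :: "real \<Rightarrow> real"
  assumes g: "integrable lborel g" and "a \<le> b"
    and outside: "\<And>x. x \<notin> {a..b} \<Longrightarrow> g x = 0"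
    and zero: "\<And>x. x \<in> {a..b} \<Longrightarrow> integral {a..x} g = 0"
  shows "AE x in lborel. g x = 0"
proof (rule AE_zero_if_set_integrals_greaterThan_zero[OF g])
  fix c
  define m where "m = max a (min c b)"
  have m: "a \<le> m" "m \<le> b"
    using \<open>a \<le> b\<close> by (auto simp: m_def)
  have "g = (\<lambda>x. if x \<in> {a..b} then g x else 0)"
    using outside by auto
  then have "integral {c<..} g = integral ({c<..} \<inter> {a..b}) g"
    using integral_restrict_Int[of "{c<..}" "{a..b}" g] by (metis Int_commute)
  also have "\<dots> = integral {m..b} g"
    by (rule integral_spike_set; rule negligible_subset[of "{m}"]) (auto simp: m_def)
  also have "\<dots> = integral {a..b} g - integral {a..m} g"
    using Henstock_Kurzweil_Integration.integral_combine[OF m integrable_lborel_integral_eq_set_integral(1)[OF g]]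
    by simp
  also have "\<dots> = 0"
    using zero m \<open>a \<le> b\<close> by simp
  finally show "(LINT x:{c<..}|lborel. g x) = 0"
    using integrable_lborel_integral_eq_set_integral(2)[OF g] by simp
qed

lemma integral_nonneg_eq_0_iff_AE_on:
  fixes h :: "'a::euclidean_space \<Rightarrow> real"
  assumes h: "h integrable_on S" and nonneg: "\<And>x. x \<in> S \<Longrightarrow> 0 \<le> h x"
  shows "integral S h = 0 \<longleftrightarrow> (AE x in lebesgue. x \<in> S \<longrightarrow> h x = 0)"
proof -
  have h_abs: "set_integrable lebesgue S h"
    using nonnegative_absolutely_integrable_1[OF h nonneg] .
  then have "integral S h = (\<integral>x. indicator S x * h x \<partial>lebesgue)"
    using set_lebesgue_integral_eq_integral(2)[OF h_abs] by (simp add: set_lebesgue_integral_def)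
  moreover have "(\<integral>x. indicator S x * h x \<partial>lebesgue) = 0 \<longleftrightarrow> (AE x in lebesgue. indicator S x * h x = 0)"
    using h_abs nonneg
    by (intro integral_nonneg_eq_0_iff_AE) (auto simp: set_integrable_def indicator_def)
  moreover have "(AE x in lebesgue. indicator S x * h x = 0) \<longleftrightarrow> (AE x in lebesgue. x \<in> S \<longrightarrow> h x = 0)"
    by (intro AE_cong) (auto simp: indicator_def)
  ultimately show ?thesis
    by simp
qed

lemma AE_eq_iff_indefinite_integrals_eq:
  fixes f g :: "real \<Rightarrow> real"
  assumes g: "g absolutely_integrable_on {a..b}" and f: "continuous_on {a..b} f" and "a \<le> b"
  shows "(AE x in lebesgue. x \<in> {a..b} \<longrightarrow> g x = f x)
    \<longleftrightarrow> (\<forall>x\<in>{a..b}. integral {a..x} g = integral {a..x} f)"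
proof
  assume "AE x in lebesgue. x \<in> {a..b} \<longrightarrow> g x = f x"
  then obtain N where "negligible N" "\<And>x. x \<in> {a..b} - N \<Longrightarrow> g x = f x"
    unfolding eventually_ae_filter_negligible by auto
  then show "\<forall>x\<in>{a..b}. integral {a..x} g = integral {a..x} f"
    by (auto intro!: integral_spike)
next
  assume eq: "\<forall>x\<in>{a..b}. integral {a..x} g = integral {a..x} f"
  obtain g0 N where g0: "integrable lborel g0" "negligible N"
    and g0_outside: "\<And>x. x \<notin> {a..b} \<Longrightarrow> g0 x = 0" and g0_eq: "\<And>x. x \<in> {a..b} - N \<Longrightarrow> g0 x = g x"
    using absolutely_integrable_on_borel_representative[OF g] by blast
  define d where "d x = g0 x - indicator {a..b} x * f x" for x
  have d: "integrable lborel d"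
    using g0(1) borel_integrable_atLeastAtMost'[OF f]
    unfolding d_def set_integrable_def by (intro Bochner_Integration.integrable_diff) auto
  have d_integrals: "integral {a..x} d = 0" if x: "x \<in> {a..b}" for x
  proof -
    have sub: "{a..x} \<subseteq> {a..b}"
      using x by auto
    have "integral {a..x} d = integral {a..x} (\<lambda>t. g t - f t)"
      using g0_eq sub by (intro integral_spike[OF g0(2)]) (auto simp: d_def)
    also have "\<dots> = integral {a..x} g - integral {a..x} f"
      using integrable_on_subinterval[OF set_lebesgue_integral_eq_integral(1)[OF g] sub]
        integrable_on_subinterval[OF integrable_continuous_interval[OF f] sub]
      by (rule integral_diff)
    finally show ?thesis
      using eq x by simp
  qed
  have "AE x in lborel. d x = 0"
    by (rule AE_zero_if_interval_integrals_zero[OF d \<open>a \<le> b\<close> _ d_integrals]) (simp add: d_def g0_outside)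
  then have "AE x in lebesgue. d x = 0"
    by (rule AE_completion)
  moreover have "AE x in lebesgue. x \<notin> N"
    using g0(2) unfolding eventually_ae_filter_negligible by auto
  ultimately show "AE x in lebesgue. x \<in> {a..b} \<longrightarrow> g x = f x"
    by eventually_elim (use g0_eq in \<open>auto simp: d_def\<close>)
qed

lemma integrable_lborel_pair_triangle:
  fixes g :: "real \<Rightarrow> real"
  assumes g: "integrable lborel g"
  shows "integrable (lborel \<Otimes>\<^sub>M lborel) (\<lambda>(x, t). if a \<le> t \<and> t \<le> x \<and> x \<le> b then g t else 0)"
proof -
  have [measurable]: "g \<in> borel_measurable borel"
    using borel_measurable_integrable[OF g] by simp
  define F where "F x t = (if a \<le> t \<and> t \<le> x \<and> x \<le> b then g t else 0)" for x t :: real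
  have F_measurable: "(\<lambda>(x, t). F x t) \<in> borel_measurable (lborel \<Otimes>\<^sub>M lborel)"
    unfolding F_def by measurable
  have int_F_x: "integrable lborel (F x)" for x
  proof -
    have "F x = (\<lambda>t. indicator {a..b} x * (indicator {a..x} t * g t))"
      by (auto simp: F_def indicator_def fun_eq_iff)
    then show ?thesis
      using integrable_mult_indicator[OF _ g, of "{a..x}"] by simp
  qed
  have norm_bound: "norm (\<integral>t. norm (F x t) \<partial>lborel) \<le> norm (indicator {a..b} x * (\<integral>t. norm (g t) \<partial>lborel))" for x
  proof (cases "x \<in> {a..b}")
    case True
    have "(\<integral>t. norm (F x t) \<partial>lborel) \<le> (\<integral>t. norm (g t) \<partial>lborel)"
      by (rule integral_mono[OF integrable_norm[OF int_F_x] integrable_norm[OF g]]) (simp add: F_def)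
    then show ?thesis
      using True by simp
  next
    case False
    then have "F x = (\<lambda>t. 0)"
      by (auto simp: F_def fun_eq_iff)
    then show ?thesis
      using False by simp
  qed
  have "integrable lborel (\<lambda>x. \<integral>t. norm (F x t) \<partial>lborel)"
  proof (rule Bochner_Integration.integrable_bound)
    show "integrable lborel (\<lambda>x. indicator {a..b} x * (\<integral>t. norm (g t) \<partial>lborel))"
      by (simp add: emeasure_lborel_Icc_eq integrable_indicator_iff)
    show "(\<lambda>x. \<integral>t. norm (F x t) \<partial>lborel) \<in> borel_measurable lborel"
      using F_measurable by measurable
  qed (use norm_bound in simp)
  then have "integrable (lborel \<Otimes>\<^sub>M lborel) (\<lambda>(x, t). F x t)"
    by (intro lborel_pair.Fubini_integrable F_measurable) (use int_F_x in auto)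
  then show ?thesis
    by (simp add: F_def)
qed

lemma integral_indefinite_integral_lborel:
  fixes g :: "real \<Rightarrow> real"
  assumes g: "integrable lborel g"
  shows "integral {a..b} (\<lambda>x. integral {a..x} g) = integral {a..b} (\<lambda>t. (b - t) * g t)"
proof -
  define F where "F x t = (if a \<le> t \<and> t \<le> x \<and> x \<le> b then g t else 0)" for x t :: real
  have "integrable (lborel \<Otimes>\<^sub>M lborel) (\<lambda>(x, t). F x t)"
    unfolding F_def by (rule integrable_lborel_pair_triangle[OF g])
  then have Fubini: "(\<integral>x. (\<integral>t. F x t \<partial>lborel) \<partial>lborel) = (\<integral>t. (\<integral>x. F x t \<partial>lborel) \<partial>lborel)"
    and int_inner_x: "integrable lborel (\<lambda>t. \<integral>x. F x t \<partial>lborel)"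
    using lborel_pair.integral_fst[of F] lborel_pair.integral_snd[of F] lborel_pair.integrable_snd[of F]
    by simp_all
  have inner_t: "(\<integral>t. F x t \<partial>lborel) = indicator {a..b} x * integral {a..x} g" for x
  proof -
    have "F x = (\<lambda>t. indicator {a..b} x * (indicator {a..x} t * g t))"
      by (auto simp: F_def indicator_def fun_eq_iff)
    then show ?thesis
      using integrable_lborel_integral_eq_set_integral(2)[OF g, of "{a..x}"]
      by (simp add: set_lebesgue_integral_def)
  qed
  have inner_x: "(\<integral>x. F x t \<partial>lborel) = indicator {a..b} t * ((b - t) * g t)" for t
  proof (cases "t \<in> {a..b}")
    case True
    then have "(\<lambda>x. F x t) = (\<lambda>x. indicator {t..b} x * g t)"
      by (auto simp: F_def indicator_def fun_eq_iff)
    then show ?thesis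
      using True by simp
  next
    case False
    then have "(\<lambda>x. F x t) = (\<lambda>x. 0)"
      by (auto simp: F_def fun_eq_iff)
    then show ?thesis
      using False by simp
  qed
  have cont: "continuous_on {a..b} (\<lambda>x. integral {a..x} g)"
    by (intro indefinite_integral_continuous_1 integrable_lborel_integral_eq_set_integral(1)[OF g]) simp
  have int: "set_integrable lborel {a..b} (\<lambda>t. (b - t) * g t)"
    using int_inner_x by (simp add: inner_x set_integrable_def)
  have "integral {a..b} (\<lambda>x. integral {a..x} g) = (\<integral>x. (\<integral>t. F x t \<partial>lborel) \<partial>lborel)"
    using set_borel_integral_eq_integral(2)[OF borel_integrable_atLeastAtMost'[OF cont]]
    by (simp add: inner_t set_lebesgue_integral_def)
  also have "\<dots> = (\<integral>t. (\<integral>x. F x t \<partial>lborel) \<partial>lborel)"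
    by (rule Fubini)
  also have "\<dots> = integral {a..b} (\<lambda>t. (b - t) * g t)"
    using set_borel_integral_eq_integral(2)[OF int] by (simp add: inner_x set_lebesgue_integral_def)
  finally show ?thesis .
qed

lemma integral_indefinite_integral:
  fixes g :: "real \<Rightarrow> real"
  assumes "g absolutely_integrable_on {a..b}"
  shows "integral {a..b} (\<lambda>x. integral {a..x} g) = integral {a..b} (\<lambda>t. (b - t) * g t)"
proof -
  obtain g0 N where g0: "integrable lborel g0" "negligible N"
    and eq: "\<And>x. x \<in> {a..b} - N \<Longrightarrow> g0 x = g x"
    by (rule absolutely_integrable_on_borel_representative[OF assms]) blast
  have "integral {a..x} g = integral {a..x} g0" if "x \<in> {a..b}" for x
    using that eq by (intro integral_spike[OF g0(2)]) auto
  then have "integral {a..b} (\<lambda>x. integral {a..x} g) = integral {a..b} (\<lambda>x. integral {a..x} g0)"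
    by (rule integral_cong)
  also have "\<dots> = integral {a..b} (\<lambda>t. (b - t) * g0 t)"
    by (rule integral_indefinite_integral_lborel[OF g0(1)])
  also have "\<dots> = integral {a..b} (\<lambda>t. (b - t) * g t)"
    using eq by (intro integral_spike[OF g0(2)]) auto
  finally show ?thesis .
qed

section \<open>Integrals along a circle\<close>

lemma circle_radicand_pos:
  fixes x R :: real
  assumes "\<bar>x\<bar> < R"
  shows "0 < R\<^sup>2 - x\<^sup>2"
  using power_strict_mono[of "\<bar>x\<bar>" R 2] assms by simp

lemma has_real_derivative_sqrt_circle:
  fixes x R :: real
  assumes "\<bar>x\<bar> < R"
  shows "((\<lambda>x. sqrt (R\<^sup>2 - x\<^sup>2)) has_real_derivative - x / sqrt (R\<^sup>2 - x\<^sup>2)) (at x)"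
proof -
  have pos: "0 < R\<^sup>2 - x\<^sup>2"
    by (rule circle_radicand_pos[OF assms])
  have "((\<lambda>x. R\<^sup>2 - x\<^sup>2) has_real_derivative - (2 * x)) (at x)"
    by (auto intro!: derivative_eq_intros)
  from DERIV_chain2[OF DERIV_real_sqrt[OF pos] this] show ?thesis
    by (simp add: divide_simps)
qed

lemma has_real_derivative_sqrt_circle_antiderivative:
  fixes x R :: real
  assumes "\<bar>x\<bar> < R"
  shows "((\<lambda>x. (x * sqrt (R\<^sup>2 - x\<^sup>2) + R\<^sup>2 * arcsin (x / R)) / 2)
    has_real_derivative sqrt (R\<^sup>2 - x\<^sup>2)) (at x)"
proof -
  have R: "0 < R" and pos: "0 < R\<^sup>2 - x\<^sup>2"
    using assms circle_radicand_pos[OF assms] by auto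
  have "-1 < x / R" "x / R < 1"
    using assms R by (auto simp: abs_less_iff field_simps)
  then have arcsin: "((\<lambda>x. arcsin (x / R)) has_real_derivative inverse (sqrt (1 - (x / R)\<^sup>2)) * (1 / R)) (at x)"
    by (rule DERIV_chain2[OF DERIV_arcsin]) (use R in \<open>auto intro!: derivative_eq_intros\<close>)
  have deriv: "((\<lambda>x. (x * sqrt (R\<^sup>2 - x\<^sup>2) + R\<^sup>2 * arcsin (x / R)) / 2) has_real_derivative
      (1 * sqrt (R\<^sup>2 - x\<^sup>2) + (- x / sqrt (R\<^sup>2 - x\<^sup>2)) * x
        + R\<^sup>2 * (inverse (sqrt (1 - (x / R)\<^sup>2)) * (1 / R))) / 2) (at x)"
    by (intro DERIV_cdivide DERIV_add DERIV_mult DERIV_cmult DERIV_ident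
        has_real_derivative_sqrt_circle[OF assms] arcsin)
  have deriv_eq: "(1 * sqrt (R\<^sup>2 - x\<^sup>2) + (- x / sqrt (R\<^sup>2 - x\<^sup>2)) * x
      + R\<^sup>2 * (inverse (sqrt (1 - (x / R)\<^sup>2)) * (1 / R))) / 2 = sqrt (R\<^sup>2 - x\<^sup>2)"
  proof -
    have "1 - (x / R)\<^sup>2 = (R\<^sup>2 - x\<^sup>2) / R\<^sup>2"
      using R by (simp add: field_simps)
    then have "sqrt (1 - (x / R)\<^sup>2) = sqrt (R\<^sup>2 - x\<^sup>2) / R"
      using R by (simp add: real_sqrt_divide)
    moreover have "sqrt (R\<^sup>2 - x\<^sup>2) * sqrt (R\<^sup>2 - x\<^sup>2) = R\<^sup>2 - x\<^sup>2"
      using pos by simp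
    ultimately show ?thesis
      using R pos by (simp add: field_simps power2_eq_square)
  qed
  show ?thesis
    using deriv unfolding deriv_eq .
qed

lemma integral_sqrt_circle:
  fixes p R :: real
  assumes "0 \<le> p" and "p < R"
  shows "integral {-p..p} (\<lambda>x. sqrt (R\<^sup>2 - x\<^sup>2)) = p * sqrt (R\<^sup>2 - p\<^sup>2) + R\<^sup>2 * arcsin (p / R)"
proof -
  define F where "F x = (x * sqrt (R\<^sup>2 - x\<^sup>2) + R\<^sup>2 * arcsin (x / R)) / 2" for x :: real
  have "((\<lambda>x. sqrt (R\<^sup>2 - x\<^sup>2)) has_integral F p - F (-p)) {-p..p}"
  proof (rule fundamental_theorem_of_calculus)
    fix x assume "x \<in> {-p..p}"
    then have "\<bar>x\<bar> < R"
      using assms by auto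
    then show "(F has_vector_derivative sqrt (R\<^sup>2 - x\<^sup>2)) (at x within {-p..p})"
      unfolding F_def has_real_derivative_iff_has_vector_derivative[symmetric]
      by (rule has_field_derivative_at_within[OF has_real_derivative_sqrt_circle_antiderivative])
  qed (use assms in simp)
  moreover have "F p - F (-p) = p * sqrt (R\<^sup>2 - p\<^sup>2) + R\<^sup>2 * arcsin (p / R)"
  proof -
    have "arcsin (- (p / R)) = - arcsin (p / R)"
      using assms by (intro arcsin_minus) (auto simp: field_simps)
    then show ?thesis
      by (simp add: F_def field_simps)
  qed
  ultimately show ?thesis
    by (metis integral_unique)
qed

lemma integral_sqrt_circle_derivative:
  fixes a b R :: real
  assumes "\<bar>a\<bar> < R" and "\<bar>b\<bar> < R" and "a \<le> b"
  shows "integral {a..b} (\<lambda>x. - x / sqrt (R\<^sup>2 - x\<^sup>2)) = sqrt (R\<^sup>2 - b\<^sup>2) - sqrt (R\<^sup>2 - a\<^sup>2)"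
proof -
  have "((\<lambda>x. - x / sqrt (R\<^sup>2 - x\<^sup>2)) has_integral sqrt (R\<^sup>2 - b\<^sup>2) - sqrt (R\<^sup>2 - a\<^sup>2)) {a..b}"
  proof (rule fundamental_theorem_of_calculus[where f="\<lambda>x. sqrt (R\<^sup>2 - x\<^sup>2)"])
    fix x assume "x \<in> {a..b}"
    then have "\<bar>x\<bar> < R"
      using assms by auto
    then show "((\<lambda>x. sqrt (R\<^sup>2 - x\<^sup>2)) has_vector_derivative - x / sqrt (R\<^sup>2 - x\<^sup>2)) (at x within {a..b})"
      unfolding has_real_derivative_iff_has_vector_derivative[symmetric]
      by (rule has_field_derivative_at_within[OF has_real_derivative_sqrt_circle])
  qed (use assms in simp)
  then show ?thesis
    by (rule integral_unique)
qed

section \<open>Calibration of the arc length\<close>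

lemma linear_le_sqrt_one_plus_square:
  fixes a b v :: real
  assumes "a\<^sup>2 + b\<^sup>2 = 1"
  shows "a + b * v \<le> sqrt (1 + v\<^sup>2)"
proof (rule real_le_rsqrt)
  have "1 + v\<^sup>2 - (a + b * v)\<^sup>2 = (a * v - b)\<^sup>2"
    using assms by algebra
  then show "(a + b * v)\<^sup>2 \<le> 1 + v\<^sup>2"
    by (metis diff_ge_0_iff_ge zero_le_power2)
qed

lemma linear_eq_sqrt_one_plus_square_iff:
  fixes a b v :: real
  assumes "0 < a" and "a\<^sup>2 + b\<^sup>2 = 1"
  shows "a + b * v = sqrt (1 + v\<^sup>2) \<longleftrightarrow> a * v = b"
proof
  have Lagrange: "1 + v\<^sup>2 - (a + b * v)\<^sup>2 = (a * v - b)\<^sup>2"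
    using assms(2) by algebra
  show "a * v = b" if "a + b * v = sqrt (1 + v\<^sup>2)"
  proof -
    have "(a + b * v)\<^sup>2 = 1 + v\<^sup>2"
      using that by simp
    then show ?thesis
      using Lagrange by simp
  qed
  show "a + b * v = sqrt (1 + v\<^sup>2)" if "a * v = b"
  proof (rule real_sqrt_unique[symmetric])
    show "(a + b * v)\<^sup>2 = 1 + v\<^sup>2"
      using Lagrange that by simp
    have "a + b * v = a * (1 + v\<^sup>2)"
      using that by (simp add: algebra_simps power2_eq_square)
    then show "0 \<le> a + b * v"
      using assms(1) by simp
  qed
qed

lemma circle_tangent_le_sqrt_one_plus_square:
  fixes x R v :: real
  assumes "\<bar>x\<bar> < R"
  shows "(sqrt (R\<^sup>2 - x\<^sup>2) - x * v) / R \<le> sqrt (1 + v\<^sup>2)"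
    and "(sqrt (R\<^sup>2 - x\<^sup>2) - x * v) / R = sqrt (1 + v\<^sup>2) \<longleftrightarrow> v = - x / sqrt (R\<^sup>2 - x\<^sup>2)"
proof -
  have R: "0 < R" and pos: "0 < R\<^sup>2 - x\<^sup>2"
    using assms circle_radicand_pos[OF assms] by auto
  define a b where "a = sqrt (R\<^sup>2 - x\<^sup>2) / R" and "b = - x / R"
  have unit: "a\<^sup>2 + b\<^sup>2 = 1"
    using R pos by (simp add: a_def b_def power_divide field_simps)
  have a: "0 < a"
    using R pos by (simp add: a_def)
  have eq: "(sqrt (R\<^sup>2 - x\<^sup>2) - x * v) / R = a + b * v"
    by (simp add: a_def b_def diff_divide_distrib)
  show "(sqrt (R\<^sup>2 - x\<^sup>2) - x * v) / R \<le> sqrt (1 + v\<^sup>2)"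
    unfolding eq by (rule linear_le_sqrt_one_plus_square[OF unit])
  have "a * v = b \<longleftrightarrow> v = - x / sqrt (R\<^sup>2 - x\<^sup>2)"
    using R pos by (auto simp: a_def b_def field_simps)
  then show "(sqrt (R\<^sup>2 - x\<^sup>2) - x * v) / R = sqrt (1 + v\<^sup>2) \<longleftrightarrow> v = - x / sqrt (R\<^sup>2 - x\<^sup>2)"
    unfolding eq linear_eq_sqrt_one_plus_square_iff[OF a unit] .
qed

lemma sqrt_one_plus_square_integrable_on:
  fixes g :: "real \<Rightarrow> real"
  assumes "g absolutely_integrable_on {a..b}"
  shows "(\<lambda>x. sqrt (1 + (g x)\<^sup>2)) integrable_on {a..b}"
proof -
  have "g \<in> borel_measurable (lebesgue_on {a..b})"
    using assms by (simp add: absolutely_integrable_measurable)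
  then have measurable: "(\<lambda>x. sqrt (1 + (g x)\<^sup>2)) \<in> borel_measurable (lebesgue_on {a..b})"
    by measurable
  have bound: "(\<lambda>x. 1 + norm (g x)) integrable_on {a..b}"
    using assms unfolding absolutely_integrable_on_def by (intro integrable_add integrable_const_ivl) simp_all
  have "norm (sqrt (1 + (g x)\<^sup>2)) \<le> 1 + norm (g x)" for x
    using sqrt_add_le_add_sqrt[of 1 "(g x)\<^sup>2"] by simp
  then have "(\<lambda>x. sqrt (1 + (g x)\<^sup>2)) absolutely_integrable_on {a..b}"
    by (intro measurable_bounded_by_integrable_imp_absolutely_integrable[OF measurable _ bound]) simp_all
  then show ?thesis
    by (rule set_lebesgue_integral_eq_integral(1))
qed

lemma absolutely_integrable_on_id_mult:
  fixes g :: "real \<Rightarrow> real"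
  assumes "g absolutely_integrable_on {a..b}"
  shows "(\<lambda>x. x * g x) absolutely_integrable_on {a..b}"
  using assms
  by (intro absolutely_integrable_bounded_measurable_product_real continuous_imp_measurable_on_sets_lebesgue)
    (auto intro: continuous_on_id)

lemma W11_with_derivD:
  assumes "W11_with_deriv p u u'" and "u (-p) = 0"
  shows "u' absolutely_integrable_on {-p..p}" and "\<And>x. x \<in> {-p..p} \<Longrightarrow> u x = integral {-p..x} u'"
  using assms by (auto simp: W11_with_deriv_def)

lemma W11_integral_id_mult_deriv:
  fixes p :: real and u u' :: "real \<Rightarrow> real"
  assumes "0 < p" and W11: "W11_with_deriv p u u'" and "u (-p) = 0" and "u p = 0"
  shows "integral {-p..p} (\<lambda>x. x * u' x) = - integral {-p..p} u"
proof -
  note u' = W11_with_derivD(1)[OF W11 \<open>u (-p) = 0\<close>]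
    and u = W11_with_derivD(2)[OF W11 \<open>u (-p) = 0\<close>]
  have int_u': "u' integrable_on {-p..p}"
    by (rule set_lebesgue_integral_eq_integral(1)[OF u'])
  have int_id_u': "(\<lambda>x. x * u' x) integrable_on {-p..p}"
    by (rule set_lebesgue_integral_eq_integral(1)[OF absolutely_integrable_on_id_mult[OF u']])
  have "integral {-p..p} u = integral {-p..p} (\<lambda>x. integral {-p..x} u')"
    by (rule integral_cong) (rule u)
  also have "\<dots> = integral {-p..p} (\<lambda>t. (p - t) * u' t)"
    by (rule integral_indefinite_integral[OF u'])
  also have "\<dots> = integral {-p..p} (\<lambda>t. p * u' t - t * u' t)"
    by (simp add: algebra_simps)
  also have "\<dots> = p * integral {-p..p} u' - integral {-p..p} (\<lambda>t. t * u' t)"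
    using integral_diff[OF integrable_on_cmult_left[OF int_u', of p] int_id_u'] by simp
  also have "integral {-p..p} u' = u p"
    using u[of p] \<open>0 < p\<close> by simp
  finally show ?thesis
    using \<open>u p = 0\<close> by simp
qed

lemma W11_deriv_AE_eq_circle_slope_iff:
  fixes p R :: real and u u' :: "real \<Rightarrow> real"
  assumes "0 < p" and "p < R" and W11: "W11_with_deriv p u u'" and "u (-p) = 0"
  shows "(AE x in lebesgue. x \<in> {-p..p} \<longrightarrow> u' x = - x / sqrt (R\<^sup>2 - x\<^sup>2))
    \<longleftrightarrow> (\<forall>x\<in>{-p..p}. u x = sqrt (R\<^sup>2 - x\<^sup>2) - sqrt (R\<^sup>2 - p\<^sup>2))"
proof -
  note u' = W11_with_derivD(1)[OF W11 \<open>u (-p) = 0\<close>]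
    and u = W11_with_derivD(2)[OF W11 \<open>u (-p) = 0\<close>]
  define w where "w = (\<lambda>x. - x / sqrt (R\<^sup>2 - x\<^sup>2))"
  have inside: "\<bar>x\<bar> < R" if "x \<in> {-p..p}" for x
    using that \<open>p < R\<close> by auto
  have "sqrt (R\<^sup>2 - x\<^sup>2) \<noteq> 0" if "x \<in> {-p..p}" for x
    using circle_radicand_pos[OF inside[OF that]] by simp
  then have "continuous_on {-p..p} w"
    unfolding w_def by (intro continuous_intros) auto
  then have "(AE x in lebesgue. x \<in> {-p..p} \<longrightarrow> u' x = w x)
      \<longleftrightarrow> (\<forall>x\<in>{-p..p}. integral {-p..x} u' = integral {-p..x} w)"
    using \<open>0 < p\<close> by (intro AE_eq_iff_indefinite_integrals_eq[OF u']) auto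
  moreover have "integral {-p..x} w = sqrt (R\<^sup>2 - x\<^sup>2) - sqrt (R\<^sup>2 - p\<^sup>2)" if "x \<in> {-p..p}" for x
    using integral_sqrt_circle_derivative[of "-p" R x] inside[OF that] \<open>p < R\<close> that
    by (simp add: w_def)
  ultimately show ?thesis
    using u by (auto simp: w_def)
qed

theorem W11_arc_length_ge_circle_calibration:
  fixes p R :: real and u u' :: "real \<Rightarrow> real"
  assumes "0 < p" and "p < R" and W11: "W11_with_deriv p u u'" and "u (-p) = 0" and "u p = 0"
  defines "L \<equiv> integral {-p..p} (\<lambda>x. sqrt (1 + (u' x)\<^sup>2))"
    and "C \<equiv> (integral {-p..p} (\<lambda>x. sqrt (R\<^sup>2 - x\<^sup>2)) + integral {-p..p} u) / R"
  shows "C \<le> L" and "L = C \<longleftrightarrow> (\<forall>x\<in>{-p..p}. u x = sqrt (R\<^sup>2 - x\<^sup>2) - sqrt (R\<^sup>2 - p\<^sup>2))"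
proof -
  note u' = W11_with_derivD(1)[OF W11 \<open>u (-p) = 0\<close>]
  define h where "h x = sqrt (1 + (u' x)\<^sup>2) - sqrt (R\<^sup>2 - x\<^sup>2) / R + x * u' x / R" for x
  have h_nonneg: "0 \<le> h x" and h_eq_0: "h x = 0 \<longleftrightarrow> u' x = - x / sqrt (R\<^sup>2 - x\<^sup>2)"
    if "x \<in> {-p..p}" for x
  proof -
    have "\<bar>x\<bar> < R"
      using that \<open>p < R\<close> by auto
    then show "0 \<le> h x" "h x = 0 \<longleftrightarrow> u' x = - x / sqrt (R\<^sup>2 - x\<^sup>2)"
      using circle_tangent_le_sqrt_one_plus_square[of x R "u' x"] by (auto simp: h_def diff_divide_distrib)
  qed
  have int_L: "(\<lambda>x. sqrt (1 + (u' x)\<^sup>2)) integrable_on {-p..p}"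
    by (rule sqrt_one_plus_square_integrable_on[OF u'])
  have int_sqrt: "(\<lambda>x. sqrt (R\<^sup>2 - x\<^sup>2) / R) integrable_on {-p..p}"
    by (intro integrable_on_divide integrable_continuous_interval continuous_intros)
  have int_id_u': "(\<lambda>x. x * u' x / R) integrable_on {-p..p}"
    using set_lebesgue_integral_eq_integral(1)[OF absolutely_integrable_on_id_mult[OF u']]
    by (rule integrable_on_divide)
  have int_h: "h integrable_on {-p..p}"
    unfolding h_def using int_L int_sqrt int_id_u' by (intro integrable_add integrable_diff)
  have "integral {-p..p} h = L - integral {-p..p} (\<lambda>x. sqrt (R\<^sup>2 - x\<^sup>2) / R)
      + integral {-p..p} (\<lambda>x. x * u' x / R)"
    unfolding h_def L_def using int_L int_sqrt int_id_u' by (simp add: integral_add integral_diff integrable_diff)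
  also have "\<dots> = L - C"
    using W11_integral_id_mult_deriv[OF \<open>0 < p\<close> W11 \<open>u (-p) = 0\<close> \<open>u p = 0\<close>]
    by (simp add: C_def add_divide_distrib)
  finally have L_eq: "L = C + integral {-p..p} h"
    by simp
  show "C \<le> L"
    unfolding L_eq using integral_nonneg[OF int_h h_nonneg] by simp
  have "L = C \<longleftrightarrow> (AE x in lebesgue. x \<in> {-p..p} \<longrightarrow> h x = 0)"
    unfolding L_eq using integral_nonneg_eq_0_iff_AE_on[OF int_h h_nonneg] by simp
  also have "\<dots> \<longleftrightarrow> (AE x in lebesgue. x \<in> {-p..p} \<longrightarrow> u' x = - x / sqrt (R\<^sup>2 - x\<^sup>2))"
    using h_eq_0 by (intro AE_cong) auto
  finally show "L = C \<longleftrightarrow> (\<forall>x\<in>{-p..p}. u x = sqrt (R\<^sup>2 - x\<^sup>2) - sqrt (R\<^sup>2 - p\<^sup>2))"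
    unfolding W11_deriv_AE_eq_circle_slope_iff[OF \<open>0 < p\<close> \<open>p < R\<close> W11 \<open>u (-p) = 0\<close>] .
qed

lemma circle_radius_from_height:
  fixes \<beta> p A :: real
  assumes "0 < \<beta>" and "\<beta> < 1" and "0 < p"
  defines "R \<equiv> p / sqrt (1 - \<beta>\<^sup>2)"
  shows "p < R" and "sqrt (R\<^sup>2 - p\<^sup>2) = \<beta> * R"
    and "(integral {-p..p} (\<lambda>x. sqrt (R\<^sup>2 - x\<^sup>2)) + A) / R
      = (arccos \<beta> / sqrt (1 - \<beta>\<^sup>2) + \<beta>) * p + sqrt (1 - \<beta>\<^sup>2) * A / p"
proof -
  define s where "s = sqrt (1 - \<beta>\<^sup>2)"
  have "\<beta>\<^sup>2 < 1"
    using assms(1,2) by (simp add: power_less_one_iff)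
  then have s: "0 < s" "s < 1" "s\<^sup>2 = 1 - \<beta>\<^sup>2"
    using assms(1) by (simp_all add: s_def)
  have R: "R = p / s" "0 < R"
    using s \<open>0 < p\<close> by (auto simp: R_def s_def)
  show "p < R"
    using R(1) s(1) mult_strict_left_mono[OF s(2) \<open>0 < p\<close>] by (simp add: less_divide_eq)
  have "p = R * s"
    using R s by simp
  then have "R\<^sup>2 - p\<^sup>2 = (\<beta> * R)\<^sup>2"
    using s(3) by algebra
  then show sqrt_R_p: "sqrt (R\<^sup>2 - p\<^sup>2) = \<beta> * R"
    using assms(1) R(2) by simp
  have "p / R = s"
    using R s(1) \<open>0 < p\<close> by simp
  then have "arcsin (p / R) = arccos \<beta>"
    using arccos_arcsin_sqrt_pos[of \<beta>] assms(1,2) by (simp add: s_def)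
  then have "integral {-p..p} (\<lambda>x. sqrt (R\<^sup>2 - x\<^sup>2)) = p * (\<beta> * R) + R\<^sup>2 * arccos \<beta>"
    using integral_sqrt_circle[of p R] \<open>0 < p\<close> \<open>p < R\<close> sqrt_R_p by simp
  then have "(integral {-p..p} (\<lambda>x. sqrt (R\<^sup>2 - x\<^sup>2)) + A) / R = p * \<beta> + R * arccos \<beta> + A / R"
    using R(2) by (simp add: field_simps power2_eq_square)
  also have "\<dots> = (arccos \<beta> / s + \<beta>) * p + s * A / p"
    unfolding R(1) using s(1) \<open>0 < p\<close> by (simp add: field_simps)
  finally show "(integral {-p..p} (\<lambda>x. sqrt (R\<^sup>2 - x\<^sup>2)) + A) / R
      = (arccos \<beta> / sqrt (1 - \<beta>\<^sup>2) + \<beta>) * p + sqrt (1 - \<beta>\<^sup>2) * A / p"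
    by (simp add: s_def)
qed

theorem mainTheorem2:
  fixes \<beta> p :: real and u u' :: "real \<Rightarrow> real"
  assumes "0 < \<beta>" and "\<beta> < 1" and "0 < p"
    and "W11_with_deriv p u u'"
    and "\<forall>x\<in>{-p..p}. u x \<ge> 0"
    and "u (-p) = 0" and "u p = 0"
  defines "L \<equiv> integral {-p..p} (\<lambda>x. sqrt (1 + (u' x)\<^sup>2))"
    and "A \<equiv> integral {-p..p} u"
    and "R \<equiv> p / sqrt (1 - \<beta>\<^sup>2)"
  shows "L \<ge> (arccos \<beta> / sqrt (1 - \<beta>\<^sup>2) + \<beta>) * p + sqrt (1 - \<beta>\<^sup>2) * A / p
    \<and> (L = (arccos \<beta> / sqrt (1 - \<beta>\<^sup>2) + \<beta>) * p + sqrt (1 - \<beta>\<^sup>2) * A / p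
         \<longleftrightarrow> (\<forall>x\<in>{-p..p}. u x = sqrt (R\<^sup>2 - x\<^sup>2) - \<beta> * R))"
proof -
  note R = circle_radius_from_height[OF assms(1-3), folded R_def]
  show ?thesis
    using W11_arc_length_ge_circle_calibration[OF assms(3) R(1) assms(4,6,7)] R(2) R(3)[of A]
    unfolding L_def A_def by simp
qed

end
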